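(* Let $0\ne f,g\in\mathbb{R}[C]$ be psd. Assume that all zeros of $g$ in $C(\mathbb{C})$ are real and that $f/g$ is a square in $\mathbb{R}(C)$. If $g=b_1^2+\cdots+b_r^2$ with $b_1,\dots,b_r\in\mathbb{R}[C]$, then there exist $a_1,\dots,a_r\in\mathbb{R}[C]$ with $f=a_1^2+\cdots+a_r^2$ and $$\delta(a_i)=\delta(b_i)+\tfrac12\bigl(\delta(f)-\delta(g)\bigr)\quad(i=1,\dots,r).$$ In particular $2\theta(f)-\delta(f)\le 2\theta(g)-\delta(g)$.
   Context: Let $q\in\mathbb{R}[x]$ be a monic polynomial of degree four without multiple roots which is indefinite (takes both positive and negative values on $\mathbb{R}$). Let $C$ be the affine plane curve over $\mathbb{R}$ with equation $y^2+q(x)=0$, coordinate ring $\mathbb{R}[C]=\mathbb{R}[x,y]/(y^2+q(x))$, function field $\mathbb{R}(C)$. Its nonsingular projective model has exactly two points at infinity, a complex conjugate pair $\infty,\overline\infty$. For $f\in\mathbb{R}(C)^*$ put $\delta(f)=-v_\infty(f)=-v_{\overline\infty}(f)$ ($v_p$ the discrete valuation at $p$), $\delta(0)=-\infty$; for $f=a(x)+b(x)y$, $\delta(f)=\max\{\deg a,\deg b+2\}$. An element $f\in\mathbb{R}[C]$ is psd if $f(p)\ge0$ for all $p\in C(\mathbb{R})$. For $0\ne f\in\mathbb{R}[C]$, $\theta(f)$ is the least integer $d\ge0$ such that $f=f_1^2+\cdots+f_r^2$ for some $r\in\mathbb{N}$ and $f_i\in\mathbb{R}[C]$ with $\delta(f_i)\le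 d$ for all $i$; $\theta(f)=\infty$ if $f$ is not a sum of squares in $\mathbb{R}[C]$. *)

theory Defs
  imports "HOL-Computational_Algebra.Polynomial" "HOL-Library.Extended_Real"
begin

text \<open>Elements of the coordinate ring R[C] = R[x,y]/(y^2+q(x)) are represented
uniquely as a(x) + b(x) y, i.e. as pairs (a,b) of real polynomials.\<close>

type_synonym crd = "real poly \<times> real poly"

definition cadd :: "crd \<Rightarrow> crd \<Rightarrow> crd" where
  "cadd u v = (fst u + fst v, snd u + snd v)"

text \<open>Multiplication uses y^2 = - q(x).\<close>
definition cmul :: "real poly \<Rightarrow> crd \<Rightarrow> crd \<Rightarrow> crd" where
  "cmul q u v = (fst u * fst v - q * snd u * snd v, fst u * snd v + snd u * fst v)"

definition czero :: crd where "czero = (0, 0)"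

definition csq :: "real poly \<Rightarrow> crd \<Rightarrow> crd" where
  "csq q u = cmul q u u"

definition csos :: "real poly \<Rightarrow> crd list \<Rightarrow> crd" where
  "csos q us = foldr (\<lambda>u acc. cadd (csq q u) acc) us czero"

definition ceval :: "crd \<Rightarrow> complex \<Rightarrow> complex \<Rightarrow> complex" where
  "ceval u x y = poly (map_poly complex_of_real (fst u)) x
                 + poly (map_poly complex_of_real (snd u)) x * y"

definition on_curve :: "real poly \<Rightarrow> complex \<Rightarrow> complex \<Rightarrow> bool" where
  "on_curve q x y \<longleftrightarrow> y\<^sup>2 + poly (map_poly complex_of_real q) x = 0"

definition psd :: "real poly \<Rightarrow> crd \<Rightarrow> bool" where
  "psd q u \<longleftrightarrow> (\<forall>x y::real. y\<^sup>2 + poly q x = 0 \<longrightarrow> poly (fst u) x + poly (snd u) x * y \<ge> 0)"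

definition pdeg :: "real poly \<Rightarrow> ereal" where
  "pdeg p = (if p = 0 then -\<infinity> else ereal (real (degree p)))"

definition delta :: "crd \<Rightarrow> ereal" where
  "delta u = max (pdeg (fst u)) (pdeg (snd u) + 2)"

definition theta :: "real poly \<Rightarrow> crd \<Rightarrow> ereal" where
  "theta q f = (if \<exists>d::nat. \<exists>fs. f = csos q fs \<and> (\<forall>h\<in>set fs. delta h \<le> ereal (real d))
     then ereal (real (LEAST d::nat. \<exists>fs. f = csos q fs \<and> (\<forall>h\<in>set fs. delta h \<le> ereal (real d))))
     else \<infinity>)"

end

theory Submission
  imports Defs "HOL-Computational_Algebra.Computational_Algebra"
    "HOL-Computational_Algebra.Field_as_Ring"
begin

(* R[C] is an integral domain with conjugation a + b y |-> a - b y and norm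
   N(a + b y) = a^2 + q b^2, and delta(u) = deg N(u) / 2 is additive.  Since f/g is a square
   and q is squarefree, f g = k^2 for some k in R[C].  If g = b_1^2 + ... + b_r^2, then g
   divides every k b_i, and a_i = k b_i / g gives f = a_1^2 + ... + a_r^2 with the stated
   delta(a_i); the bound on theta follows by rescaling an optimal representation of g.
   Divisibility g | k b_i means N(g) | k b_i conj(g).  All zeros of N(g) are x-coordinates
   of real points of C, so it suffices to check the full power of (x - x0) at each of them.
   For this R[C] is expanded into real power series in a local parameter (x - x0 at
   unramified points, y at ramified ones); in a sum of squares of real power series lowest
   terms cannot cancel, so each b_i vanishes to half the order of g, and k to half the
   order of f g. *)


section \<open>Arithmetic in the coordinate ring\<close>

definition cconj :: "crd \<Rightarrow> crd" where
  "cconj u = (fst u, - snd u)"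

text \<open>The norm N(a + b y) = (a + b y)(a - b y) = a^2 + q b^2.\<close>
definition cnorm :: "real poly \<Rightarrow> crd \<Rightarrow> real poly" where
  "cnorm q u = fst u ^ 2 + q * snd u ^ 2"

lemma cmul_comm: "cmul q u v = cmul q v u"
  by (simp add: cmul_def algebra_simps)

lemma cmul_assoc: "cmul q (cmul q u v) w = cmul q u (cmul q v w)"
  by (simp add: cmul_def algebra_simps)

lemma cmul_swap: "cmul q (cmul q a b) (cmul q c d) = cmul q (cmul q a c) (cmul q b d)"
  by (simp add: cmul_def algebra_simps)

lemma cmul_cadd: "cmul q u (cadd v w) = cadd (cmul q u v) (cmul q u w)"
  by (simp add: cmul_def cadd_def algebra_simps)

lemma cmul_czero: "cmul q u czero = czero"
  by (simp add: cmul_def czero_def)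

lemma cmul_conj: "cmul q u (cconj u) = (cnorm q u, 0)"
  by (simp add: cmul_def cconj_def cnorm_def power2_eq_square algebra_simps)

lemma cnorm_cmul: "cnorm q (cmul q u v) = cnorm q u * cnorm q v"
  by (simp add: cmul_def cnorm_def power2_eq_square algebra_simps)

lemma cmul_const: "cmul q (p, 0) u = (p * fst u, p * snd u)"
  by (simp add: cmul_def)

text \<open>Leading terms of polynomials with nonnegative leading coefficients cannot cancel;
  this makes the norm form a^2 + q b^2 anisotropic when q has positive leading coefficient.\<close>
lemma degree_add_lead_coeff_nonneg:
  fixes P R :: "real poly"
  assumes "lead_coeff P \<ge> 0" "lead_coeff R \<ge> 0"
  shows "degree (P + R) = max (degree P) (degree R) \<and> (P + R = 0 \<longrightarrow> P = 0 \<and> R = 0)"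
proof (cases "degree P = degree R")
  case True
  show ?thesis
  proof (cases "P = 0 \<or> R = 0")
    case False
    then have "lead_coeff P > 0" "lead_coeff R > 0" using assms by (auto simp: less_le)
    then have c: "coeff (P + R) (degree P) \<noteq> 0" using True by simp
    then have "degree (P + R) \<ge> degree P" by (simp add: le_degree)
    moreover have "degree (P + R) \<le> max (degree P) (degree R)" by (rule degree_add_le_max)
    moreover have "P + R \<noteq> 0" using c by (metis coeff_0)
    ultimately show ?thesis using True by auto
  qed auto
next
  case False
  have "P + R \<noteq> 0" using False by (metis add_eq_0_iff degree_minus)
  with False show ?thesis
    by (cases "degree P < degree R") (auto simp: degree_add_eq_right degree_add_eq_left)
qed

locale quartic_curve =
  fixes q :: "real poly"
  assumes q_monic: "lead_coeff q = 1" and q_deg: "degree q = 4"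
begin

lemma q_nz: "q \<noteq> 0"
  using q_deg by auto

lemma cnorm_props:
  "degree (cnorm q u) = max (degree (fst u ^ 2)) (degree (q * snd u ^ 2)) \<and>
   (cnorm q u = 0 \<longrightarrow> fst u ^ 2 = 0 \<and> q * snd u ^ 2 = 0)"
  unfolding cnorm_def
  by (rule degree_add_lead_coeff_nonneg) (simp_all add: lead_coeff_mult lead_coeff_power q_monic)

lemma cnorm_eq_0: "cnorm q u = 0 \<longleftrightarrow> u = czero"
proof
  assume "cnorm q u = 0"
  then show "u = czero" using cnorm_props[of u] q_nz by (cases u) (auto simp: czero_def)
qed (simp add: cnorm_def czero_def)

lemma cmul_eq_czero: "cmul q u v = czero \<longleftrightarrow> u = czero \<or> v = czero"
proof
  assume "cmul q u v = czero"
  then have "cnorm q u * cnorm q v = 0" by (metis cnorm_eq_0 cnorm_cmul)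
  then show "u = czero \<or> v = czero" by (auto simp: cnorm_eq_0)
qed (auto simp: cmul_czero cmul_comm[of q czero])

lemma cmul_cancel:
  assumes "u \<noteq> czero" "cmul q u v = cmul q u w"
  shows "v = w"
proof -
  have "cmul q (cmul q (cconj u) u) v = cmul q (cmul q (cconj u) u) w"
    using assms(2) by (simp add: cmul_assoc)
  then have "(cnorm q u * fst v, cnorm q u * snd v) = (cnorm q u * fst w, cnorm q u * snd w)"
    by (simp add: cmul_comm[of q "cconj u"] cmul_conj cmul_const)
  moreover have "cnorm q u \<noteq> 0" using assms(1) cnorm_eq_0 by blast
  ultimately show ?thesis by (cases v; cases w) auto
qed

lemma degree_cnorm:
  "degree (cnorm q u) = max (2 * degree (fst u)) (if snd u = 0 then 0 else 2 * degree (snd u) + 4)"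
proof -
  have "degree (p ^ 2) = 2 * degree p" for p :: "real poly"
    by (cases "p = 0") (auto simp: degree_power_eq)
  then show ?thesis using cnorm_props[of u] q_deg q_nz by (auto simp: degree_mult_eq)
qed

lemma delta_cnorm: "u \<noteq> czero \<Longrightarrow> delta u = ereal (real (degree (cnorm q u)) / 2)"
  by (cases u) (auto simp: delta_def pdeg_def degree_cnorm czero_def max_def)

lemma delta_czero: "delta czero = -\<infinity>"
  by (simp add: delta_def pdeg_def czero_def)

lemma delta_not_inf: "delta u \<noteq> \<infinity>"
  by (simp add: delta_def pdeg_def max_def)

lemma delta_nat:
  assumes "u \<noteq> czero"
  shows "\<exists>m::nat. delta u = ereal (real m)"
proof -
  have "even (degree (cnorm q u))" by (simp add: degree_cnorm max_def)
  then show ?thesis using delta_cnorm[OF assms]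
    by (intro exI[of _ "degree (cnorm q u) div 2"]) (auto elim: evenE)
qed

lemma delta_cmul: "delta (cmul q u v) = delta u + delta v"
proof (cases "u = czero \<or> v = czero")
  case True
  then show ?thesis using delta_not_inf[of u] delta_not_inf[of v]
    by (auto simp: cmul_czero cmul_comm[of q czero] delta_czero)
next
  case False
  then have "cnorm q u \<noteq> 0" "cnorm q v \<noteq> 0" by (auto simp: cnorm_eq_0)
  then show ?thesis using False
    by (simp add: delta_cnorm cmul_eq_czero cnorm_cmul degree_mult_eq add_divide_distrib)
qed

end


lemma csos_Cons: "csos q (u # us) = cadd (csq q u) (csos q us)"
  by (simp add: csos_def)

lemma csos_cmul_square: "cmul q (cmul q d d) (csos q xs) = csos q (map (cmul q d) xs)"
proof (induction xs)
  case Nil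
  then show ?case by (simp add: csos_def cmul_czero)
next
  case (Cons x xs)
  have "cmul q (cmul q d d) (csq q x) = csq q (cmul q d x)"
    by (simp add: csq_def cmul_def algebra_simps)
  then show ?case using Cons by (simp add: csos_Cons cmul_cadd)
qed

lemma csos_nonzero_summand: "csos q xs \<noteq> czero \<Longrightarrow> \<exists>i<length xs. xs ! i \<noteq> czero"
proof (induction xs)
  case (Cons x xs)
  then show ?case
    by (cases "x = czero") (auto simp: csos_Cons csq_def cmul_def cadd_def czero_def)
qed (simp add: csos_def)


section \<open>Square roots in the coordinate ring\<close>

abbreviation cp :: "real poly \<Rightarrow> complex poly" where
  "cp p \<equiv> map_poly complex_of_real p"

lemma cp_add: "cp (p + r) = cp p + cp r"
  by (rule poly_eqI) (simp add: coeff_map_poly)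

lemma cp_mult: "cp (p * r) = cp p * cp r"
  by (rule poly_eqI) (simp add: coeff_map_poly coeff_mult)

lemma cp_power: "cp (p ^ n) = cp p ^ n"
  by (induction n) (simp_all add: cp_mult)

lemma cp_dvd: "p dvd r \<Longrightarrow> cp p dvd cp r"
  by (metis cp_mult dvd_def)

lemma poly_cp_real: "poly (cp p) (complex_of_real x) = complex_of_real (poly p x)"
  by (induction p) (auto simp: map_poly_pCons)

lemma unit_if_square_dvd_rsquarefree:
  fixes n q :: "real poly"
  assumes "rsquarefree (cp q)" "n ^ 2 dvd q" "n \<noteq> 0"
  shows "is_unit n"
proof (rule ccontr)
  assume "\<not> is_unit n"
  then have "degree n \<noteq> 0" using assms(3) is_unit_iff_degree by blast
  then have "\<not> constant (poly (cp n))" by (simp add: constant_degree degree_map_poly)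
  then obtain z where "poly (cp n) z = 0" using fundamental_theorem_of_algebra by blast
  then have "[:-z, 1:] dvd cp n" by (simp add: poly_eq_0_iff_dvd)
  then have "[:-z, 1:] ^ 2 dvd cp n ^ 2" by (rule dvd_power_same)
  also have "cp n ^ 2 dvd cp q" using cp_dvd[OF assms(2)] by (simp add: cp_power)
  finally have "[:-z, 1:] ^ 2 dvd cp q" .
  moreover have "cp q \<noteq> 0" using assms by (simp add: rsquarefree_def)
  ultimately have "2 \<le> order z (cp q)" by (simp add: order_divides)
  then show False using assms unfolding rsquarefree_def
    by (metis One_nat_def Suc_1 not_less_eq_eq order_0I zero_le)
qed

lemma rsquarefree_no_double_root:
  assumes "rsquarefree (cp q)"
  shows "\<not> [:-x0, 1:] ^ 2 dvd q"
proof
  assume "[:-x0, 1:] ^ 2 dvd q"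
  then have "is_unit [:-x0, 1:]" by (rule unit_if_square_dvd_rsquarefree[OF assms]) simp
  then show False by (simp add: is_unit_iff_degree)
qed

lemma dvd_if_square_dvd_rsquarefree_mult:
  fixes n q s :: "real poly"
  assumes "rsquarefree (cp q)" "n ^ 2 dvd q * s ^ 2"
  shows "n dvd s"
proof (cases "n = 0")
  case True
  then have "q * s ^ 2 = 0" using assms(2) by simp
  moreover have "q \<noteq> 0" using assms(1) by (auto simp: rsquarefree_def)
  ultimately show ?thesis by simp
next
  case False
  then have gnz: "gcd n s \<noteq> 0" by simp
  obtain n1 s1 where ns: "n = n1 * gcd n s" "s = s1 * gcd n s" "coprime n1 s1"
    using gcd_coprime_exists[OF gnz] by blast
  have "n ^ 2 = n1 ^ 2 * (gcd n s) ^ 2" by (metis ns(1) power_mult_distrib)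
  moreover have "q * s ^ 2 = (q * s1 ^ 2) * (gcd n s) ^ 2"
    by (metis ns(2) power_mult_distrib mult.assoc)
  ultimately have "n1 ^ 2 * (gcd n s) ^ 2 dvd (q * s1 ^ 2) * (gcd n s) ^ 2"
    using assms(2) by (simp only:)
  then have "n1 ^ 2 dvd q * s1 ^ 2" using gnz dvd_times_right_cancel_iff[of "(gcd n s) ^ 2"] by simp
  moreover have "coprime (n1 ^ 2) (s1 ^ 2)" using ns(3) by simp
  ultimately have "n1 ^ 2 dvd q" by (simp add: coprime_dvd_mult_left_iff)
  moreover have "n1 \<noteq> 0" using False ns by auto
  ultimately have "is_unit n1" using unit_if_square_dvd_rsquarefree[OF assms(1)] by blast
  then have "n1 dvd s1" by (rule unit_imp_dvd)
  then have "n1 * gcd n s dvd s1 * gcd n s" by (rule mult_dvd_mono) simp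
  then show ?thesis using ns(1,2) by metis
qed

locale smooth_quartic_curve = quartic_curve +
  assumes q_rsquarefree: "rsquarefree (cp q)"
begin

text \<open>Writing S = s conj(v) one gets S^2 = n^2 w with n = N(v), and squarefreeness of
  q shows that n divides both components of S.\<close>
lemma square_of_square_quotient:
  assumes v: "v \<noteq> czero" and h: "cmul q w (csq q v) = csq q s"
  shows "\<exists>k. cmul q k k = w"
proof -
  define n where "n = cnorm q v"
  have nz: "(n, 0) \<noteq> czero" using v by (simp add: n_def cnorm_eq_0 czero_def)
  define S where "S = cmul q s (cconj v)"
  have "cmul q S S = cmul q (cmul q s s) (cmul q (cconj v) (cconj v))"
    unfolding S_def by (rule cmul_swap)
  also have "\<dots> = cmul q (cmul q w (cmul q v v)) (cmul q (cconj v) (cconj v))"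
    using h by (simp add: csq_def)
  also have "\<dots> = cmul q w (cmul q (cmul q v (cconj v)) (cmul q v (cconj v)))"
    by (subst cmul_assoc, subst cmul_swap, rule refl)
  also have "\<dots> = (n * n * fst w, n * n * snd w)"
    by (simp only: cmul_conj n_def) (simp add: cmul_def)
  finally have SS: "cmul q S S = (n * n * fst w, n * n * snd w)" .
  obtain S0 S1 where S: "S = (S0, S1)" by (cases S)
  have e0: "S0 * S0 - q * S1 * S1 = n * n * fst w" and e1: "S0 * S1 + S1 * S0 = n * n * snd w"
    using SS S by (simp_all add: cmul_def)
  define N where "N = S0 ^ 2 + q * S1 ^ 2"
  have "N ^ 2 = (S0 * S0 - q * S1 * S1) ^ 2 + q * (S0 * S1 + S1 * S0) ^ 2"
    unfolding N_def by (simp add: power2_eq_square algebra_simps)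
  also have "\<dots> = (n ^ 2) ^ 2 * (fst w ^ 2 + q * snd w ^ 2)"
    unfolding e0 e1 by (simp add: power2_eq_square algebra_simps)
  finally have "(n ^ 2) ^ 2 dvd N ^ 2" by simp
  then have nN: "n ^ 2 dvd N" using pow_divides_pow_iff[of 2 "n ^ 2" N] by simp
  have "N + n ^ 2 * fst w = S0 ^ 2 + S0 ^ 2"
    unfolding N_def power2_eq_square e0[symmetric] by (simp add: algebra_simps)
  also have "\<dots> = smult 2 (S0 ^ 2)"
    using smult_add_left[of 1 1 "S0 ^ 2"] by (simp add: one_add_one)
  finally have "N + n ^ 2 * fst w = smult 2 (S0 ^ 2)" .
  moreover have "n ^ 2 dvd N + n ^ 2 * fst w" using nN by simp
  ultimately have "n ^ 2 dvd S0 ^ 2" by (metis dvd_smult_cancel zero_neq_numeral)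
  then have nS0: "n dvd S0" by simp
  then have "n ^ 2 dvd N - S0 ^ 2" using nN by simp
  then have "n ^ 2 dvd q * S1 ^ 2" unfolding N_def by simp
  then have nS1: "n dvd S1" by (rule dvd_if_square_dvd_rsquarefree_mult[OF q_rsquarefree])
  define k where "k = (S0 div n, S1 div n)"
  have nk: "cmul q (n, 0) k = S" unfolding k_def S using nS0 nS1 by (simp add: cmul_def)
  have "cmul q (n, 0) (cmul q (n, 0) (cmul q k k)) = cmul q S S"
    unfolding nk[symmetric] by (subst cmul_swap, subst cmul_assoc, rule refl)
  also have "\<dots> = cmul q (n, 0) (cmul q (n, 0) w)" unfolding SS by (simp add: cmul_def)
  finally have "cmul q (n, 0) (cmul q k k) = cmul q (n, 0) w" by (rule cmul_cancel[OF nz])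
  then have "cmul q k k = w" by (rule cmul_cancel[OF nz])
  then show ?thesis by blast
qed

end


section \<open>Vanishing orders of power series\<close>

definition vanishes_to :: "nat \<Rightarrow> real fps \<Rightarrow> bool" where
  "vanishes_to n F \<longleftrightarrow> (\<forall>i<n. F $ i = 0)"

lemma vanishes_to_0 [simp]: "vanishes_to 0 F" "vanishes_to n 0"
  by (simp_all add: vanishes_to_def)

lemma vanishes_to_mono: "vanishes_to n F \<Longrightarrow> m \<le> n \<Longrightarrow> vanishes_to m F"
  by (simp add: vanishes_to_def)

lemma vanishes_to_add: "vanishes_to n F \<Longrightarrow> vanishes_to n G \<Longrightarrow> vanishes_to n (F + G)"
  by (simp add: vanishes_to_def)

lemma vanishes_to_diff: "vanishes_to n F \<Longrightarrow> vanishes_to n G \<Longrightarrow> vanishes_to n (F - G)"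
  by (simp add: vanishes_to_def)

lemma vanishes_to_half: "vanishes_to n (F + F) \<Longrightarrow> vanishes_to n F"
  unfolding vanishes_to_def
proof (intro allI impI)
  fix i assume "\<forall>i<n. (F + F) $ i = 0" "i < n"
  then have "F $ i + F $ i = 0" by (simp only: fps_add_nth)
  then show "F $ i = 0" by linarith
qed

lemma vanishes_to_subdegree: "vanishes_to (subdegree F) F"
  by (auto simp: vanishes_to_def intro: nth_less_subdegree_zero)

lemma vanishes_to_le_subdegree: "vanishes_to n F \<Longrightarrow> F \<noteq> 0 \<Longrightarrow> n \<le> subdegree F"
  using nth_subdegree_nonzero[of F] unfolding vanishes_to_def by (meson not_le)

lemma vanishes_to_mult:
  assumes F: "vanishes_to m F" and G: "vanishes_to n G"
  shows "vanishes_to (m + n) (F * G)"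
  unfolding vanishes_to_def fps_mult_nth
proof (intro allI impI sum.neutral ballI)
  fix i j assume "i < m + n" "j \<in> {0..i}"
  then have "j < m \<or> i - j < n" by auto
  then show "F $ j * G $ (i - j) = 0" using F G by (auto simp: vanishes_to_def)
qed

lemma vanishes_to_mult_left: "vanishes_to m F \<Longrightarrow> vanishes_to m (F * G)"
  using vanishes_to_mult[of m F 0 G] by simp

lemma vanishes_to_power: "vanishes_to m F \<Longrightarrow> vanishes_to (m * k) (F ^ k)"
  by (induction k) (simp_all add: vanishes_to_mult)

lemma vanishes_to_compose:
  assumes "vanishes_to m H"
  shows "vanishes_to m (H oo G)"
  unfolding vanishes_to_def fps_compose_nth
proof (intro allI impI sum.neutral ballI)
  fix n i assume "n < m" "i \<in> {0..n}"
  then have "H $ i = 0" using assms by (simp add: vanishes_to_def)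
  then show "H $ i * (G ^ i) $ n = 0" by simp
qed

lemma square_nth_double:
  fixes F :: "real fps"
  assumes "vanishes_to j F"
  shows "(F ^ 2) $ (2 * j) = (F $ j) ^ 2"
proof -
  have "(F ^ 2) $ (2 * j) = (\<Sum>a = 0..2*j. F $ a * F $ (2 * j - a))"
    by (simp add: power2_eq_square fps_mult_nth)
  also have "\<dots> = F $ j * F $ (2 * j - j) + (\<Sum>a \<in> {0..2*j} - {j}. F $ a * F $ (2 * j - a))"
    by (subst sum.remove[of _ j]) auto
  also have "(\<Sum>a \<in> {0..2*j} - {j}. F $ a * F $ (2 * j - a)) = 0"
  proof (rule sum.neutral, intro ballI)
    fix a assume "a \<in> {0..2*j} - {j}"
    then have "a < j \<or> 2 * j - a < j" by auto
    then show "F $ a * F $ (2 * j - a) = 0" using assms by (auto simp: vanishes_to_def)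
  qed
  finally show ?thesis by (simp add: power2_eq_square)
qed

text \<open>No cancellation in real sums of squares: if j0 is the least index at which some F_i
  has a nonzero coefficient, then the sum of the F_i^2 has a positive coefficient at 2 j0.\<close>
lemma sum_squares_subdegree:
  fixes Fs :: "real fps list"
  shows "\<exists>j0. subdegree (\<Sum>F\<leftarrow>Fs. F ^ 2) \<le> 2 * j0 \<and> (\<forall>F\<in>set Fs. vanishes_to j0 F)"
proof (cases "\<forall>F\<in>set Fs. F = 0")
  case True
  then have "(\<Sum>F\<leftarrow>Fs. F ^ 2) = 0" by (induction Fs) auto
  then show ?thesis using True by (intro exI[of _ 0]) auto
next
  case False
  define P where "P j \<longleftrightarrow> (\<exists>F\<in>set Fs. F $ j \<noteq> 0)" for j
  from False obtain F0 where "F0 \<in> set Fs" "F0 \<noteq> 0" by auto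
  then have "P (subdegree F0)" unfolding P_def using nth_subdegree_nonzero[of F0] by blast
  then have Pj0: "P (LEAST j. P j)" by (rule LeastI)
  define j0 where "j0 = (LEAST j. P j)"
  have vanish: "\<forall>F\<in>set Fs. vanishes_to j0 F"
    unfolding vanishes_to_def using not_less_Least[of _ P] by (auto simp: P_def j0_def)
  from Pj0 obtain F1 where F1: "F1 \<in> set Fs" "F1 $ j0 \<noteq> 0" by (auto simp: P_def j0_def)
  have "(F1 $ j0) ^ 2 \<le> (\<Sum>F\<leftarrow>Fs. (F $ j0) ^ 2)"
    by (rule member_le_sum_list) (use F1 in auto)
  moreover have "(F1 $ j0) ^ 2 > 0" using F1 by simp
  moreover have "(\<Sum>F\<leftarrow>Fs. F ^ 2) $ (2 * j0) = (\<Sum>F\<leftarrow>Fs. (F $ j0) ^ 2)"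
    using vanish by (induction Fs) (simp_all add: square_nth_double)
  ultimately have "(\<Sum>F\<leftarrow>Fs. F ^ 2) $ (2 * j0) \<noteq> 0" by linarith
  then show ?thesis using vanish subdegree_leI by blast
qed


section \<open>Local expansions of the coordinate ring\<close>

text \<open>An injective ring homomorphism from R[x] into real power series; together with a series
  Y satisfying Y^2 = - E(q) it gives a ring embedding of R[C] (a local expansion of R[C]).\<close>
definition fps_embedding :: "(real poly \<Rightarrow> real fps) \<Rightarrow> bool" where
  "fps_embedding E \<longleftrightarrow> (\<forall>p r. E (p + r) = E p + E r) \<and> (\<forall>p r. E (p * r) = E p * E r) \<and> E 1 = 1
     \<and> (\<forall>p. E p = 0 \<longrightarrow> p = 0)"

definition expansion :: "(real poly \<Rightarrow> real fps) \<Rightarrow> real fps \<Rightarrow> crd \<Rightarrow> real fps" where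
  "expansion E Y u = E (fst u) + E (snd u) * Y"

context
  fixes E :: "real poly \<Rightarrow> real fps"
  assumes E: "fps_embedding E"
begin

lemma emb_add: "E (p + r) = E p + E r"
  using E by (simp add: fps_embedding_def)

lemma emb_mult: "E (p * r) = E p * E r"
  using E by (simp add: fps_embedding_def)

lemma emb_1: "E 1 = 1"
  using E by (simp add: fps_embedding_def)

lemma emb_inj: "E p = 0 \<Longrightarrow> p = 0"
  using E by (simp add: fps_embedding_def)

lemma emb_0: "E 0 = 0"
  using emb_add[of 0 0] by simp

lemma emb_uminus: "E (- p) = - E p"
  using emb_add[of p "-p"] emb_0 by (metis add.right_inverse add_eq_0_iff)

lemma emb_diff: "E (p - r) = E p - E r"
  using emb_add[of p "-r"] emb_uminus[of r] by simp

lemma emb_power: "E (p ^ n) = E p ^ n"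
  using E by (induction n) (simp_all add: emb_mult fps_embedding_def)

lemma expansion_add: "expansion E Y (cadd u v) = expansion E Y u + expansion E Y v"
  by (simp add: expansion_def cadd_def emb_add algebra_simps)

lemma expansion_conj: "expansion E Y (cconj u) = expansion E (-Y) u"
  by (simp add: expansion_def cconj_def emb_uminus)

end

locale curve_expansion = quartic_curve +
  fixes E :: "real poly \<Rightarrow> real fps" and Y :: "real fps"
  assumes E: "fps_embedding E" and Y: "Y ^ 2 = - E q"
begin

lemma curve_expansion_neg: "curve_expansion q E (- Y)"
  using E Y by unfold_locales simp_all

lemmas E_hom = emb_add[OF E] emb_diff[OF E] emb_mult[OF E] emb_power[OF E] emb_uminus[OF E] emb_0[OF E]

lemma E_q: "E q = - (Y ^ 2)"
  using Y by simp

lemma expansion_cmul: "expansion E Y (cmul q u v) = expansion E Y u * expansion E Y v"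
proof -
  have "expansion E Y (cmul q u v) = E (fst u) * E (fst v) - E q * E (snd u) * E (snd v)
     + (E (fst u) * E (snd v) + E (snd u) * E (fst v)) * Y"
    by (simp add: expansion_def cmul_def E_hom)
  also have "\<dots> = expansion E Y u * expansion E Y v"
    by (simp add: expansion_def E_q power2_eq_square algebra_simps)
  finally show ?thesis .
qed

lemma expansion_csos: "expansion E Y (csos q bs) = (\<Sum>b\<leftarrow>bs. (expansion E Y b) ^ 2)"
proof (induction bs)
  case Nil
  then show ?case by (simp add: csos_def czero_def expansion_def E_hom)
next
  case (Cons b bs)
  then show ?case by (simp add: csos_Cons expansion_add[OF E] csq_def expansion_cmul power2_eq_square)
qed

lemma expansion_norm: "expansion E Y u * expansion E (-Y) u = E (cnorm q u)"
  by (simp add: cnorm_def expansion_def E_hom E_q power2_eq_square algebra_simps)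

lemma expansion_nonzero: "u \<noteq> czero \<Longrightarrow> expansion E Y u \<noteq> 0"
  using expansion_norm[of u] emb_inj[OF E] cnorm_eq_0 by fastforce

text \<open>Local form of the key estimate: if k^2 = f g and g = b_1^2 + ... + b_r^2, then
  ord(k b_i) \<ge> ord(g).  Indeed ord(b_i) \<ge> ord(g)/2 by the absence of cancellation in
  sums of real squares, and ord(k) = (ord f + ord g)/2 \<ge> ord(g)/2.\<close>
lemma summand_product_vanishes:
  assumes k: "cmul q k k = cmul q f g" and f: "f \<noteq> czero" and g: "g \<noteq> czero"
    and gs: "g = csos q bs" and b: "b \<in> set bs"
  shows "vanishes_to (subdegree (expansion E Y g)) (expansion E Y (cmul q k b))"
proof -
  let ?P = "expansion E Y"
  have kk: "?P k * ?P k = ?P f * ?P g" using k expansion_cmul by metis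
  have Pf: "?P f \<noteq> 0" and Pg: "?P g \<noteq> 0" using expansion_nonzero f g by blast+
  then have "?P k \<noteq> 0" using kk by auto
  then have sd: "subdegree (?P k) + subdegree (?P k) = subdegree (?P f) + subdegree (?P g)"
    using kk Pf Pg by (metis subdegree_mult)
  obtain j0 where j0: "subdegree (?P g) \<le> 2 * j0" "\<forall>F\<in>set (map ?P bs). vanishes_to j0 F"
    using sum_squares_subdegree[of "map ?P bs"] gs expansion_csos by (auto simp: comp_def)
  have "vanishes_to (subdegree (?P k) + j0) (?P k * ?P b)"
    using j0(2) b by (intro vanishes_to_mult vanishes_to_subdegree) auto
  moreover have "subdegree (?P g) \<le> subdegree (?P k) + j0" using sd j0(1) by linarith
  ultimately show ?thesis using expansion_cmul vanishes_to_mono by metis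
qed

text \<open>Consequently W = k b conj(g) has components whose images vanish to the order of the
  image of N(g) = g conj(g): the expansions of W along the two branches are
  (k b)(Y) g(-Y) and (k b)(-Y) g(Y), and the components are their half sum and difference.\<close>
lemma conj_product_vanishes:
  assumes k: "cmul q k k = cmul q f g" and f: "f \<noteq> czero" and g: "g \<noteq> czero"
    and gs: "g = csos q bs" and b: "b \<in> set bs"
  defines "W \<equiv> cmul q (cmul q k b) (cconj g)"
  shows "vanishes_to (subdegree (E (cnorm q g))) (E (fst W))
       \<and> vanishes_to (subdegree (E (cnorm q g))) (E (snd W) * Y)"
proof -
  interpret neg: curve_expansion q E "- Y" by (rule curve_expansion_neg)
  let ?n = "subdegree (E (cnorm q g))"
  have n: "?n = subdegree (expansion E Y g) + subdegree (expansion E (-Y) g)"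
    using expansion_norm[of g] expansion_nonzero neg.expansion_nonzero g
    by (metis subdegree_mult)
  have "vanishes_to ?n (expansion E Y (cmul q k b) * expansion E (-Y) g)"
    unfolding n
    by (intro vanishes_to_mult vanishes_to_subdegree summand_product_vanishes[OF k f g gs b])
  then have v1: "vanishes_to ?n (expansion E Y W)"
    unfolding W_def expansion_cmul expansion_conj[OF E] .
  have "vanishes_to ?n (expansion E (-Y) (cmul q k b) * expansion E Y g)"
    unfolding n using vanishes_to_mult[OF neg.summand_product_vanishes[OF k f g gs b]
        vanishes_to_subdegree[of "expansion E Y g"]]
    by (simp add: add.commute)
  then have v2: "vanishes_to ?n (expansion E (-Y) W)"
    unfolding W_def neg.expansion_cmul expansion_conj[OF E] by simp
  have "E (fst W) + E (fst W) = expansion E Y W + expansion E (-Y) W"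
    by (simp add: expansion_def)
  then have "vanishes_to ?n (E (fst W))"
    using vanishes_to_add[OF v1 v2] vanishes_to_half by metis
  moreover have "E (snd W) * Y + E (snd W) * Y = expansion E Y W - expansion E (-Y) W"
    by (simp add: expansion_def)
  then have "vanishes_to ?n (E (snd W) * Y)"
    using vanishes_to_diff[OF v1 v2] vanishes_to_half by metis
  ultimately show ?thesis by blast
qed

lemma conj_product_dvd:
  assumes k: "cmul q k k = cmul q f g" and f: "f \<noteq> czero" and g: "g \<noteq> czero"
    and gs: "g = csos q bs" and b: "b \<in> set bs"
    and s_le: "s \<le> subdegree (E (cnorm q g))"
    and crit_fst: "\<And>p. vanishes_to s (E p) \<Longrightarrow> d dvd p"
    and crit_snd: "\<And>p. vanishes_to s (E p * Y) \<Longrightarrow> d dvd p"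
  shows "d dvd fst (cmul q (cmul q k b) (cconj g)) \<and> d dvd snd (cmul q (cmul q k b) (cconj g))"
  using conj_product_vanishes[OF k f g gs b] s_le vanishes_to_mono crit_fst crit_snd by blast

end


section \<open>Local parameters at the real points of the curve\<close>

definition recenter :: "real \<Rightarrow> real poly \<Rightarrow> real poly" where
  "recenter x0 p = pcompose p [:x0, 1:]"

definition taylor :: "real \<Rightarrow> real poly \<Rightarrow> real fps" where
  "taylor x0 p = fps_of_poly (recenter x0 p)"

lemma recenter_back: "pcompose (recenter x0 p) [:-x0, 1:] = p"
proof -
  have "pcompose [:x0, 1:] [:-x0, 1:] = [:0, 1:]" by (simp add: pcompose_pCons)
  then show ?thesis unfolding recenter_def by (metis pcompose_assoc pcompose_idR)
qed

lemma pcompose_power: "pcompose (p ^ n) r = (pcompose p r) ^ n"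
  by (induction n) (simp_all add: pcompose_1 pcompose_mult)

lemma dvd_recenter: "[:-x0, 1:] ^ n dvd p \<longleftrightarrow> monom 1 n dvd recenter x0 p"
proof
  assume "[:-x0, 1:] ^ n dvd p"
  then obtain r where "p = [:-x0, 1:] ^ n * r" by (auto elim: dvdE)
  then have "recenter x0 p = (pcompose [:-x0, 1:] [:x0, 1:]) ^ n * recenter x0 r"
    by (simp add: recenter_def pcompose_mult pcompose_power)
  also have "pcompose [:-x0, 1:] [:x0, 1:] = [:0, 1:]" by (simp add: pcompose_pCons)
  finally show "monom 1 n dvd recenter x0 p" by (simp add: monom_altdef)
next
  assume "monom 1 n dvd recenter x0 p"
  then obtain r where "recenter x0 p = [:0, 1:] ^ n * r" by (auto simp: monom_altdef elim: dvdE)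
  then have "pcompose (recenter x0 p) [:-x0, 1:] = (pcompose [:0, 1:] [:-x0, 1:]) ^ n * pcompose r [:-x0, 1:]"
    by (simp add: pcompose_mult pcompose_power)
  also have "pcompose [:0, 1:] [:-x0, 1:] = [:-x0, 1:]" by (simp add: pcompose_pCons)
  finally show "[:-x0, 1:] ^ n dvd p" by (simp add: recenter_back)
qed

lemma vanishes_to_taylor: "vanishes_to n (taylor x0 p) \<longleftrightarrow> [:-x0, 1:] ^ n dvd p"
  by (simp add: vanishes_to_def taylor_def monom_1_dvd_iff' dvd_recenter)

lemma taylor_nth_0: "taylor x0 p $ 0 = poly p x0"
  by (simp add: taylor_def recenter_def pcompose_coeff_0)

lemma fps_embedding_taylor: "fps_embedding (taylor x0)"
  unfolding fps_embedding_def
proof (intro conjI allI impI)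
  fix p assume "taylor x0 p = 0"
  then have "recenter x0 p = 0" by (simp add: taylor_def)
  then show "p = 0" using recenter_back[of x0 p] by simp
qed (simp_all add: taylor_def recenter_def pcompose_add pcompose_mult pcompose_1
    fps_of_poly_add fps_of_poly_mult)

text \<open>Unramified real points (q(x0) < 0): x - x0 is a local parameter and y is the
  power series square root of -q(x0 + t), a unit.\<close>
definition unram_y :: "real \<Rightarrow> real poly \<Rightarrow> real fps" where
  "unram_y x0 q = fps_radical (\<lambda>n a. root n a) 2 (taylor x0 (-q))"

lemma unram_y_props:
  assumes "poly q x0 < 0"
  shows "(unram_y x0 q) ^ 2 = - taylor x0 q \<and> unram_y x0 q $ 0 \<noteq> 0"
proof -
  have pos: "taylor x0 (-q) $ 0 > 0" using assms by (simp add: taylor_nth_0)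
  have "(fps_radical (\<lambda>n a. root n a) (Suc 1) (taylor x0 (-q))) ^ (Suc 1) = taylor x0 (-q)"
    using power_radical[of "taylor x0 (-q)" "\<lambda>n a. root n a" 1] pos real_root_pow_pos[of "Suc 1"]
    by simp
  then show ?thesis
    using pos emb_uminus[OF fps_embedding_taylor] by (simp add: unram_y_def numeral_2_eq_2)
qed

context quartic_curve
begin

text \<open>At an unramified point x - x0 is the parameter, so orders of polynomials are root
  multiplicities, and y is a unit.\<close>
lemma unram_dvd:
  assumes x0: "poly q x0 < 0"
    and k: "cmul q k k = cmul q f g" and f: "f \<noteq> czero" and g: "g \<noteq> czero"
    and gs: "g = csos q bs" and b: "b \<in> set bs"
  shows "[:-x0, 1:] ^ order x0 (cnorm q g) dvd fst (cmul q (cmul q k b) (cconj g)) \<and>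
         [:-x0, 1:] ^ order x0 (cnorm q g) dvd snd (cmul q (cmul q k b) (cconj g))"
proof -
  let ?Y = "unram_y x0 q" and ?m = "order x0 (cnorm q g)"
  have Y: "?Y ^ 2 = - taylor x0 q" and Y0: "?Y $ 0 \<noteq> 0" using unram_y_props[OF x0] by auto
  interpret curve_expansion q "taylor x0" ?Y
    using fps_embedding_taylor Y by unfold_locales
  have "taylor x0 (cnorm q g) \<noteq> 0" using g cnorm_eq_0 emb_inj[OF E] by blast
  moreover have "vanishes_to ?m (taylor x0 (cnorm q g))"
    unfolding vanishes_to_taylor by (rule order_1)
  ultimately have "?m \<le> subdegree (taylor x0 (cnorm q g))" by (simp add: vanishes_to_le_subdegree)
  moreover have "[:-x0, 1:] ^ ?m dvd p" if "vanishes_to ?m (taylor x0 p * ?Y)" for p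
  proof -
    have "vanishes_to ?m (taylor x0 p * ?Y * inverse ?Y)"
      using that vanishes_to_mult_left by blast
    then show ?thesis using inverse_mult_eq_1'[OF Y0] by (simp add: mult.assoc vanishes_to_taylor)
  qed
  ultimately show ?thesis by (intro conj_product_dvd[OF k f g gs b]) (simp_all add: vanishes_to_taylor)
qed

end

text \<open>Ramified real points (q(x0) = 0, a simple root): y is a local parameter.  With
  F(t) = -q(x0 + t), which has F(0) = 0 and F'(0) \<noteq> 0, the point of the curve with y = t has
  x = x0 + T(t) where T = F^{-1}(t^2).\<close>
definition ram_x :: "real \<Rightarrow> real poly \<Rightarrow> real fps" where
  "ram_x x0 q = fps_inv (taylor x0 (-q)) oo fps_X ^ 2"

definition ram_embedding :: "real \<Rightarrow> real poly \<Rightarrow> real poly \<Rightarrow> real fps" where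
  "ram_embedding x0 q p = taylor x0 p oo ram_x x0 q"

lemma fps_inv_nth_0: "fps_inv a $ 0 = 0"
  by (simp add: fps_inv_def)

lemma ram_x_nth_0: "ram_x x0 q $ 0 = 0"
  by (simp add: ram_x_def fps_inv_nth_0)

lemma compose_X2_nth: "(H oo fps_X ^ 2) $ n = (if even n then H $ (n div 2) else (0::real))"
proof -
  have "(H oo fps_X ^ 2) $ n = (\<Sum>i = 0..n. if i = n div 2 \<and> even n then H $ i else 0)"
    unfolding fps_compose_nth by (rule sum.cong) (auto simp: power_mult[symmetric])
  also have "\<dots> = (if even n then H $ (n div 2) else 0)"
    by (cases "even n") (simp_all add: sum.delta')
  finally show ?thesis .
qed

lemma vanishes_to_2_ram_x: "vanishes_to 2 (ram_x x0 q)"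
  unfolding vanishes_to_def ram_x_def
  by (auto simp: compose_X2_nth fps_inv_nth_0 less_2_cases_iff)

context
  fixes q :: "real poly" and x0 :: real
  assumes q0: "poly q x0 = 0" and simple: "\<not> [:-x0, 1:] ^ 2 dvd q"
begin

lemma taylor_neg_q_nth_1: "taylor x0 (-q) $ 1 \<noteq> 0"
proof
  assume "taylor x0 (-q) $ 1 = 0"
  then have "vanishes_to 2 (taylor x0 (-q))"
    using q0 unfolding vanishes_to_def by (auto simp: taylor_nth_0 less_2_cases_iff)
  then show False using simple by (simp add: vanishes_to_taylor)
qed

lemma taylor_neg_q_nth_0: "taylor x0 (-q) $ 0 = 0"
  using q0 by (simp add: taylor_nth_0)

text \<open>Undoing the substitution: p(x0 + T(t)) with t^2 = F(s) recovers the Taylor series of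
  p at x0, so vanishing of ram_embedding to order 2m (or 2m of its product with t) gives
  divisibility by (x - x0)^m.\<close>
lemma ram_embedding_even_vanish:
  assumes "\<forall>i<m. ram_embedding x0 q p $ (2 * i) = 0"
  shows "[:-x0, 1:] ^ m dvd p"
proof -
  let ?F = "taylor x0 (-q)"
  let ?H = "taylor x0 p oo fps_inv ?F"
  have ram: "ram_embedding x0 q p = ?H oo fps_X ^ 2"
    unfolding ram_embedding_def ram_x_def by (rule fps_compose_assoc) (simp_all add: fps_inv_nth_0)
  have "vanishes_to m ?H"
    using assms unfolding vanishes_to_def ram compose_X2_nth by simp
  then have "vanishes_to m (?H oo ?F)" by (rule vanishes_to_compose)
  also have "?H oo ?F = taylor x0 p"
    by (metis fps_compose_assoc[OF taylor_neg_q_nth_0 fps_inv_nth_0]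
        fps_inv[OF taylor_neg_q_nth_0 taylor_neg_q_nth_1] fps_compose_fps_X)
  finally show ?thesis by (simp add: vanishes_to_taylor)
qed

lemma ram_embedding_vanish: "vanishes_to (2 * m) (ram_embedding x0 q p) \<Longrightarrow> [:-x0, 1:] ^ m dvd p"
  by (rule ram_embedding_even_vanish) (simp add: vanishes_to_def)

lemma ram_embedding_X_vanish:
  assumes "vanishes_to (2 * m) (ram_embedding x0 q p * fps_X)"
  shows "[:-x0, 1:] ^ m dvd p"
proof (rule ram_embedding_even_vanish, intro allI impI)
  fix i assume "i < m"
  then have "Suc (2 * i) < 2 * m" by simp
  then have "(ram_embedding x0 q p * fps_X) $ Suc (2 * i) = 0"
    using assms unfolding vanishes_to_def by blast
  then have "(fps_X * ram_embedding x0 q p) $ Suc (2 * i) = 0" by (simp only: mult.commute)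
  then show "ram_embedding x0 q p $ (2 * i) = 0" by (simp only: fps_X_mult_nth) simp
qed

lemma fps_embedding_ram: "fps_embedding (ram_embedding x0 q)"
  unfolding fps_embedding_def
proof (intro conjI allI impI)
  fix p assume "ram_embedding x0 q p = 0"
  then have "[:-x0, 1:] ^ Suc (degree p) dvd p"
    by (intro ram_embedding_vanish[of "Suc (degree p)"]) simp
  then show "p = 0"
    by (metis degree_linear_power dvd_imp_degree_le lessI not_le one_neq_zero)
qed (simp_all add: ram_embedding_def emb_add[OF fps_embedding_taylor] fps_compose_add_distrib
    emb_mult[OF fps_embedding_taylor] fps_compose_mult_distrib[OF ram_x_nth_0]
    emb_1[OF fps_embedding_taylor])

lemma ram_embedding_q: "fps_X ^ 2 = - ram_embedding x0 q q"
proof -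
  have "ram_embedding x0 q (- q) = (taylor x0 (-q) oo fps_inv (taylor x0 (-q))) oo fps_X ^ 2"
    unfolding ram_embedding_def ram_x_def by (rule fps_compose_assoc) (simp_all add: fps_inv_nth_0)
  also have "\<dots> = fps_X ^ 2"
    by (simp add: fps_inv_right[OF taylor_neg_q_nth_0 taylor_neg_q_nth_1])
  finally show ?thesis using emb_uminus[OF fps_embedding_ram, of q] by simp
qed

text \<open>x - x0 has order 2 in the parameter t, so a root of multiplicity m gives order 2m.\<close>
lemma ram_embedding_order: "vanishes_to (2 * order x0 G) (ram_embedding x0 q G)"
proof -
  obtain r where r: "G = [:-x0, 1:] ^ order x0 G * r" using order_1 by (metis dvdE)
  have "ram_embedding x0 q [:-x0, 1:] = ram_x x0 q"
    by (simp add: ram_embedding_def taylor_def recenter_def pcompose_pCons ram_x_nth_0)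
  then have "ram_embedding x0 q G = ram_x x0 q ^ order x0 G * ram_embedding x0 q r"
    by (subst r) (simp add: emb_mult[OF fps_embedding_ram] emb_power[OF fps_embedding_ram])
  then show ?thesis
    using vanishes_to_mult_left[OF vanishes_to_power[OF vanishes_to_2_ram_x]] by (metis mult.commute)
qed

end

context quartic_curve
begin

text \<open>At a ramified point the parameter is y, and orders of polynomials are doubled.\<close>
lemma ram_dvd:
  assumes q0: "poly q x0 = 0" and simple: "\<not> [:-x0, 1:] ^ 2 dvd q"
    and k: "cmul q k k = cmul q f g" and f: "f \<noteq> czero" and g: "g \<noteq> czero"
    and gs: "g = csos q bs" and b: "b \<in> set bs"
  shows "[:-x0, 1:] ^ order x0 (cnorm q g) dvd fst (cmul q (cmul q k b) (cconj g)) \<and>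
         [:-x0, 1:] ^ order x0 (cnorm q g) dvd snd (cmul q (cmul q k b) (cconj g))"
proof -
  let ?E = "ram_embedding x0 q" and ?m = "order x0 (cnorm q g)"
  interpret curve_expansion q ?E fps_X
    using fps_embedding_ram[OF q0 simple] ram_embedding_q[OF q0 simple] by unfold_locales
  have "?E (cnorm q g) \<noteq> 0" using g cnorm_eq_0 emb_inj[OF E] by blast
  then have "2 * ?m \<le> subdegree (?E (cnorm q g))"
    by (rule vanishes_to_le_subdegree[OF ram_embedding_order[OF q0 simple]])
  then show ?thesis
    by (rule conj_product_dvd[OF k f g gs b])
       (simp_all add: ram_embedding_vanish[OF q0 simple] ram_embedding_X_vanish[OF q0 simple])
qed

end


section \<open>From local to global divisibility\<close>

lemma cnorm_roots_real:
  assumes zr: "\<forall>x y. on_curve q x y \<and> ceval g x y = 0 \<longrightarrow> Im x = 0 \<and> Im y = 0"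
    and z: "poly (cp (cnorm q g)) z = 0"
  shows "\<exists>x0 y0. z = complex_of_real x0 \<and> y0 ^ 2 + poly q x0 = 0"
proof -
  define y where "y = csqrt (- poly (cp q) z)"
  have y2: "y ^ 2 = - poly (cp q) z" by (simp add: y_def)
  let ?a = "poly (cp (fst g)) z" and ?b = "poly (cp (snd g)) z"
  have "poly (cp (cnorm q g)) z = ?a ^ 2 + poly (cp q) z * ?b ^ 2"
    by (simp add: cnorm_def cp_add cp_mult cp_power)
  also have "\<dots> = ?a ^ 2 - ?b ^ 2 * y ^ 2" using y2 by simp
  also have "\<dots> = ceval g z y * ceval g z (-y)"
    unfolding ceval_def by (simp add: power2_eq_square algebra_simps)
  finally have "ceval g z y = 0 \<or> ceval g z (-y) = 0" using z by simp
  then obtain y' where y': "ceval g z y' = 0" "y' ^ 2 = - poly (cp q) z"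
    using y2 by (metis power2_minus)
  moreover have "on_curve q z y'" using y' by (simp add: on_curve_def)
  ultimately have "Im z = 0" "Im y' = 0" using zr by blast+
  then have zr: "z = complex_of_real (Re z)" and yr: "y' = complex_of_real (Re y')"
    by (simp_all add: complex_eq_iff)
  have "complex_of_real ((Re y') ^ 2 + poly q (Re z)) =
        (complex_of_real (Re y')) ^ 2 + poly (cp q) (complex_of_real (Re z))"
    by (simp add: poly_cp_real)
  also have "\<dots> = y' ^ 2 + poly (cp q) z" using zr yr by simp
  also have "\<dots> = 0" using y' by simp
  finally have "(Re y') ^ 2 + poly q (Re z) = 0" by (simp only: of_real_eq_0_iff)
  then show ?thesis using zr by blast
qed

lemma dvd_if_root_powers_dvd:
  fixes G A :: "real poly"
  assumes "G \<noteq> 0" and "\<forall>z. poly (cp G) z = 0 \<longrightarrow> (\<exists>x. z = complex_of_real x)"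
    and "\<forall>x. poly G x = 0 \<longrightarrow> [:-x, 1:] ^ order x G dvd A"
  shows "G dvd A"
proof -
  have "G \<noteq> 0 \<longrightarrow> (\<forall>z. poly (cp G) z = 0 \<longrightarrow> (\<exists>x. z = complex_of_real x)) \<longrightarrow>
    (\<forall>A. (\<forall>x. poly G x = 0 \<longrightarrow> [:-x, 1:] ^ order x G dvd A) \<longrightarrow> G dvd A)"
  proof (induction G rule: poly_root_order_induct)
    case (no_roots p)
    show ?case
    proof (intro impI allI)
      assume p0: "p \<noteq> 0" and "\<forall>z. poly (cp p) z = 0 \<longrightarrow> (\<exists>x. z = complex_of_real x)"
      then have "\<not> (\<exists>z. poly (cp p) z = 0)"
        using no_roots poly_cp_real by (metis of_real_eq_0_iff)
      then have "constant (poly (cp p))" using fundamental_theorem_of_algebra by blast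
      then have "degree p = 0" by (simp add: constant_degree degree_map_poly)
      then show "p dvd A" for A using p0 is_unit_iff_degree unit_imp_dvd by blast
    qed
  next
    case (root p x n)
    show ?case
    proof (intro impI allI)
      let ?L = "[:-x, 1:] ^ n"
      assume G0: "?L * p \<noteq> 0"
        and cr: "\<forall>z. poly (cp (?L * p)) z = 0 \<longrightarrow> (\<exists>x. z = complex_of_real x)"
      fix A assume H: "\<forall>y. poly (?L * p) y = 0 \<longrightarrow> [:-y, 1:] ^ order y (?L * p) dvd A"
      have "order x (?L * p) = n"
        using G0 root.hyps(2) by (simp add: order_mult order_power_n_n order_0I)
      moreover have "poly (?L * p) x = 0" using root.hyps(1) by simp
      ultimately have "?L dvd A" using H by metis
      then obtain A' where A': "A = ?L * A'" by (auto elim: dvdE)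
      have "[:-y, 1:] ^ order y p dvd A'" if py: "poly p y = 0" for y
      proof -
        have oL: "order y ?L = 0" using py root.hyps(2) by (intro order_0I) auto
        then have "order y (?L * p) = order y p" using G0 by (simp add: order_mult)
        then have d: "[:-y, 1:] ^ order y p dvd ?L * A'"
          using H py A' by (metis poly_mult mult_zero_right)
        show ?thesis
        proof (cases "A' = 0")
          case False
          then have "order y p \<le> order y (?L * A')" using d by (simp add: order_divides)
          also have "\<dots> = order y A'" using False oL by (simp add: order_mult)
          finally show ?thesis by (simp add: order_divides)
        qed simp
      qed
      moreover have "\<forall>z. poly (cp p) z = 0 \<longrightarrow> (\<exists>x. z = complex_of_real x)"
        using cr by (simp add: cp_mult)
      ultimately have "p dvd A'" using root.IH G0 by auto
      then show "?L * p dvd A" using A' by simp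
    qed
  qed simp
  then show ?thesis using assms by blast
qed

context smooth_quartic_curve
begin

text \<open>N(g) divides k b conj(g): at every zero x0 of N(g) (a real point of the curve,
  ramified or not) the local estimate gives divisibility by the full power of (x - x0).\<close>
lemma cnorm_dvd_conj_product:
  assumes zr: "\<forall>x y. on_curve q x y \<and> ceval g x y = 0 \<longrightarrow> Im x = 0 \<and> Im y = 0"
    and k: "cmul q k k = cmul q f g" and f: "f \<noteq> czero" and g: "g \<noteq> czero"
    and gs: "g = csos q bs" and b: "b \<in> set bs"
  shows "cnorm q g dvd fst (cmul q (cmul q k b) (cconj g)) \<and>
         cnorm q g dvd snd (cmul q (cmul q k b) (cconj g))"
proof -
  let ?W = "cmul q (cmul q k b) (cconj g)"
  have local: "[:-x, 1:] ^ order x (cnorm q g) dvd fst ?W \<and>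
               [:-x, 1:] ^ order x (cnorm q g) dvd snd ?W"
    if "poly (cnorm q g) x = 0" for x
  proof -
    have "poly (cp (cnorm q g)) (complex_of_real x) = 0" using that by (simp add: poly_cp_real)
    then obtain x0 y0 where "complex_of_real x = complex_of_real x0" "y0 ^ 2 + poly q x0 = 0"
      using cnorm_roots_real[OF zr] by blast
    then have xy: "y0 ^ 2 + poly q x = 0" by simp
    show ?thesis
    proof (cases "y0 = 0")
      case True
      then have "poly q x = 0" using xy by simp
      then show ?thesis
        using ram_dvd[OF _ rsquarefree_no_double_root[OF q_rsquarefree] k f g gs b] by blast
    next
      case False
      then have "y0 ^ 2 > 0" by simp
      then have "poly q x < 0" using xy by linarith
      then show ?thesis using unram_dvd[OF _ k f g gs b] by blast
    qed
  qed
  have nz: "cnorm q g \<noteq> 0" using g cnorm_eq_0 by blast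
  have roots: "\<forall>z. poly (cp (cnorm q g)) z = 0 \<longrightarrow> (\<exists>x. z = complex_of_real x)"
    using cnorm_roots_real[OF zr] by blast
  show ?thesis
    by (intro conjI dvd_if_root_powers_dvd[OF nz roots]) (use local in blast)+
qed

lemma dvd_k_summand:
  assumes zr: "\<forall>x y. on_curve q x y \<and> ceval g x y = 0 \<longrightarrow> Im x = 0 \<and> Im y = 0"
    and k: "cmul q k k = cmul q f g" and f: "f \<noteq> czero" and g: "g \<noteq> czero"
    and gs: "g = csos q bs" and b: "b \<in> set bs"
  shows "\<exists>a. cmul q g a = cmul q k b"
proof -
  let ?W = "cmul q (cmul q k b) (cconj g)" and ?N = "cnorm q g"
  define a where "a = (fst ?W div ?N, snd ?W div ?N)"
  have cg: "cconj g \<noteq> czero" using g by (cases g) (simp add: cconj_def czero_def)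
  have "cmul q (cconj g) g = (?N, 0)" using cmul_comm cmul_conj by metis
  then have "cmul q (cconj g) (cmul q g a) = cmul q (?N, 0) a" by (simp flip: cmul_assoc)
  also have "\<dots> = ?W"
    using cnorm_dvd_conj_product[OF zr k f g gs b] by (simp add: cmul_const a_def)
  also have "\<dots> = cmul q (cconj g) (cmul q k b)" by (rule cmul_comm)
  finally have "cmul q g a = cmul q k b" by (rule cmul_cancel[OF cg])
  then show ?thesis by blast
qed

end


section \<open>Rescaling sums of squares and the bound on theta\<close>

lemma ereal_half_shift:
  fixes A B :: ereal and rg rf rk :: real
  assumes "ereal rg + A = ereal rk + B" "ereal rk + ereal rk = ereal rf + ereal rg"
    "A \<noteq> \<infinity>" "B \<noteq> \<infinity>"
  shows "A = B + (ereal rf - ereal rg) / 2"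
  using assms by (cases A; cases B) (auto simp: field_simps)

context quartic_curve
begin

lemma sos_of_divisible_summands:
  assumes k: "cmul q k k = cmul q f g" and f: "f \<noteq> czero" and g: "g \<noteq> czero"
    and gs: "g = csos q bs" and dvd: "\<forall>b\<in>set bs. \<exists>a. cmul q g a = cmul q k b"
  shows "\<exists>as. length as = length bs \<and> f = csos q as \<and>
           (\<forall>i<length bs. delta (as ! i) = delta (bs ! i) + (delta f - delta g) / 2)"
proof -
  obtain quot where quot: "\<And>b. b \<in> set bs \<Longrightarrow> cmul q g (quot b) = cmul q k b"
    using dvd by metis
  define as where "as = map quot bs"
  have gg: "cmul q g g \<noteq> czero" using g by (simp add: cmul_eq_czero)
  have "cmul q (cmul q g g) (csos q as) = csos q (map (cmul q k) bs)"
    using quot by (simp add: csos_cmul_square as_def cong: map_cong)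
  also have "\<dots> = cmul q (cmul q g g) f"
    by (simp flip: csos_cmul_square add: k gs) (simp add: cmul_def algebra_simps)
  finally have "csos q as = f" by (rule cmul_cancel[OF gg])
  moreover have "delta (as ! i) = delta (bs ! i) + (delta f - delta g) / 2"
    if i: "i < length bs" for i
  proof -
    have "cmul q g (as ! i) = cmul q k (bs ! i)" using quot i by (simp add: as_def)
    then have e1: "delta g + delta (as ! i) = delta k + delta (bs ! i)" by (metis delta_cmul)
    have e2: "delta k + delta k = delta f + delta g" using k delta_cmul by metis
    have "k \<noteq> czero" using k f g cmul_eq_czero by metis
    then obtain mk where mk: "delta k = ereal (real mk)" using delta_nat by blast
    obtain mf mg where mf: "delta f = ereal (real mf)" and mg: "delta g = ereal (real mg)"
      using delta_nat f g by metis
    show ?thesis using ereal_half_shift[of mg "delta (as ! i)" mk "delta (bs ! i)" mf] e1 e2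
        mf mg mk delta_not_inf by simp
  qed
  ultimately show ?thesis by (intro exI[of _ as]) (auto simp: as_def)
qed

lemma theta_le:
  assumes f: "f \<noteq> czero" and fs: "f = csos q fs" and bound: "\<forall>h\<in>set fs. delta h \<le> ereal r"
  shows "theta q f \<le> ereal r"
proof -
  obtain i where i: "i < length fs" "fs ! i \<noteq> czero" using csos_nonzero_summand f fs by blast
  then obtain m where "delta (fs ! i) = ereal (real m)" using delta_nat by blast
  then have r0: "0 \<le> r" using bound i by (metis nth_mem of_nat_0_le_iff ereal_less_eq(3) order.trans)
  have "delta h \<le> ereal (real (nat \<lfloor>r\<rfloor>))" if "h \<in> set fs" for h
  proof (cases "h = czero")
    case False
    then obtain m where m: "delta h = ereal (real m)" using delta_nat by blast
    then have "ereal (real m) \<le> ereal r" using bound that by metis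
    then have "real m \<le> r" by simp
    then have "m \<le> nat \<lfloor>r\<rfloor>" by linarith
    then show ?thesis using m by simp
  qed (simp add: delta_czero)
  then have P: "\<exists>fs'. f = csos q fs' \<and> (\<forall>h\<in>set fs'. delta h \<le> ereal (real (nat \<lfloor>r\<rfloor>)))"
    using fs by blast
  then have "theta q f = ereal (real (LEAST d::nat. \<exists>fs. f = csos q fs \<and>
      (\<forall>h\<in>set fs. delta h \<le> ereal (real d))))"
    by (auto simp: theta_def)
  moreover have "(LEAST d::nat. \<exists>fs. f = csos q fs \<and> (\<forall>h\<in>set fs. delta h \<le> ereal (real d)))
      \<le> nat \<lfloor>r\<rfloor>"
    using P by (rule Least_le)
  ultimately show ?thesis using r0 by simp linarith
qed

lemma theta_attained:
  assumes "theta q g \<noteq> \<infinity>"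
  shows "\<exists>d::nat. theta q g = ereal (real d) \<and>
           (\<exists>bs. g = csos q bs \<and> (\<forall>h\<in>set bs. delta h \<le> ereal (real d)))"
proof -
  let ?P = "\<lambda>d::nat. \<exists>bs. g = csos q bs \<and> (\<forall>h\<in>set bs. delta h \<le> ereal (real d))"
  have "\<exists>d. ?P d" using assms by (auto simp: theta_def split: if_splits)
  then have "?P (LEAST d. ?P d)" by (rule LeastI_ex)
  moreover have "theta q g = ereal (real (LEAST d. ?P d))" using \<open>\<exists>d. ?P d\<close> by (simp add: theta_def)
  ultimately show ?thesis by blast
qed

lemma theta_bound_of_rescaling:
  assumes f: "f \<noteq> czero" and g: "g \<noteq> czero"
    and rescale: "\<And>bs. g = csos q bs \<Longrightarrow> \<exists>as. length as = length bs \<and> f = csos q as \<and>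
           (\<forall>i<length bs. delta (as ! i) = delta (bs ! i) + (delta f - delta g) / 2)"
  shows "2 * theta q f - delta f \<le> 2 * theta q g - delta g"
proof -
  obtain mf mg :: nat where mf: "delta f = ereal (real mf)" and mg: "delta g = ereal (real mg)"
    using delta_nat f g by metis
  define D where "D = (real mf - real mg) / 2"
  have shift: "(delta f - delta g) / 2 = ereal D" by (simp add: mf mg D_def)
  show ?thesis
  proof (cases "theta q g = \<infinity>")
    case True
    then show ?thesis using mg by simp
  next
    case False
    then obtain d bs where d: "theta q g = ereal (real d)" and bs: "g = csos q bs"
      and bound: "\<forall>h\<in>set bs. delta h \<le> ereal (real d)"
      using theta_attained by blast
    obtain as where as: "length as = length bs" "f = csos q as"
      "\<forall>i<length bs. delta (as ! i) = delta (bs ! i) + ereal D"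
      using rescale[OF bs] shift by auto
    have "\<forall>h\<in>set as. delta h \<le> ereal (real d + D)"
    proof
      fix h assume "h \<in> set as"
      then obtain i where i: "i < length bs" "h = as ! i" using as(1) by (auto simp: in_set_conv_nth)
      then have "delta h = delta (bs ! i) + ereal D" using as(3) by simp
      also have "\<dots> \<le> ereal (real d) + ereal D" using bound i by (intro add_right_mono) auto
      finally show "delta h \<le> ereal (real d + D)" by simp
    qed
    then have le: "theta q f \<le> ereal (real d + D)" using theta_le[OF f as(2)] by blast
    moreover have "theta q f \<noteq> -\<infinity>" by (simp add: theta_def)
    ultimately obtain t where t: "theta q f = ereal t" by (cases "theta q f") auto
    have "2 * t - real mf \<le> 2 * real d - real mg" using le t by (simp add: D_def field_simps)
    then show ?thesis using t d mf mg by simp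
  qed
qed

end


theorem lemma2p12:
  fixes q :: "real poly" and f g :: crd and bs :: "crd list"
  assumes q_monic: "lead_coeff q = 1"
    and q_deg: "degree q = 4"
    and q_sqfree: "rsquarefree (map_poly complex_of_real q)"
    and q_indef: "(\<exists>x. poly q x > 0) \<and> (\<exists>x. poly q x < 0)"
    and f_nz: "f \<noteq> czero" and g_nz: "g \<noteq> czero"
    and f_psd: "psd q f" and g_psd: "psd q g"
    and g_zeros_real: "\<forall>x y. on_curve q x y \<and> ceval g x y = 0 \<longrightarrow> Im x = 0 \<and> Im y = 0"
    and fg_square: "\<exists>u v. v \<noteq> czero \<and> cmul q f (csq q v) = cmul q g (csq q u)"
  shows "(g = csos q bs \<longrightarrow>
           (\<exists>as. length as = length bs \<and> f = csos q as \<and>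
              (\<forall>i<length bs. delta (as ! i) = delta (bs ! i) + (delta f - delta g) / 2)))
      \<and> 2 * theta q f - delta f \<le> 2 * theta q g - delta g"
proof -
  interpret smooth_quartic_curve q
    by unfold_locales (use q_monic q_deg q_sqfree in auto)
  obtain u v where v: "v \<noteq> czero" and uv: "cmul q f (csq q v) = cmul q g (csq q u)"
    using fg_square by blast
  have "cmul q (cmul q f g) (csq q v) = cmul q g (cmul q f (csq q v))"
    by (simp add: cmul_def algebra_simps)
  also have "\<dots> = cmul q g (cmul q g (csq q u))" by (simp only: uv)
  also have "\<dots> = csq q (cmul q u g)" by (simp add: csq_def cmul_def algebra_simps)
  finally obtain k where k: "cmul q k k = cmul q f g"
    using square_of_square_quotient[OF v] by blast
  have rescale: "\<exists>as. length as = length bs' \<and> f = csos q as \<and>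
      (\<forall>i<length bs'. delta (as ! i) = delta (bs' ! i) + (delta f - delta g) / 2)"
    if "g = csos q bs'" for bs'
    using sos_of_divisible_summands[OF k f_nz g_nz that]
      dvd_k_summand[OF g_zeros_real k f_nz g_nz that] by blast
  show ?thesis using rescale theta_bound_of_rescaling[OF f_nz g_nz rescale] by blast
qed

end
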